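(* Let $S$ be a self-adjoint subspace in $X^2$ and $T$ a closed Hermitian subspace in $X^2$, and assume $\rho(S)\cap\rho(T)\cap\mathbb R\neq\emptyset$. If $T$ is a finite rank perturbation of $S$, or if $(T-\lambda I)^{-1}-(S-\lambda I)^{-1}$ is a trace class operator on $X$ for some $\lambda\in\rho(S)\cap\rho(T)\cap\mathbb R$, then $T$ is a self-adjoint subspace in $X^2$.
   Context: $X$ is a complex Hilbert space and $X^2=X\times X$ carries the inner product $\langle (x,f),(y,g)\rangle=\langle x,y\rangle+\langle f,g\rangle$. A subspace $T$ in $X^2$ means a linear subspace of $X^2$ (a linear relation); a linear operator in $X$ is identified with its graph. Notation: $D(T)=\{x:(x,f)\in T \text{ for some } f\}$, $T^{-1}=\{(f,x):(x,f)\in T\}$, $\lambda I$ is the graph of $x\mapsto\lambda x$, $T-\lambda I=\{(x,f-\lambda x):(x,f)\in T\}$. The adjoint is $T^*=\{(y,g)\in X^2:\langle g,x\rangle=\langle y,f\rangle \text{ for all }(x,f)\in T\}$; $T$ is Hermitian if $T\subset T^*$ and self-adjoint if $T=T^*$. Resolvent set: $\rho(T)=\{\lambda\in\mathbb C:(\lambda I-T)^{-1}$ is a bounded linear operator defined on all of $X\}$. Finite rank perturbation: for closed subspaces $T,S$ in $X^2$ with orthogonal projections $P_T,P_S$ of $X^2$ onto $T$, $S$, $T$ is a finite rank perturbation of $S$ if $P_T-P_S$ has finite-dimensional range. *)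

theory Defs
  imports "HOL-Analysis.Analysis"
begin

class complex_vector = real_vector +
  fixes scaleC :: "complex \<Rightarrow> 'a \<Rightarrow> 'a"
  assumes scaleC_add_right: "scaleC a (x + y) = scaleC a x + scaleC a y"
    and scaleC_add_left: "scaleC (a + b) x = scaleC a x + scaleC b x"
    and scaleC_scaleC: "scaleC a (scaleC b x) = scaleC (a * b) x"
    and scaleC_one: "scaleC 1 x = x"
    and scaleR_scaleC: "scaleR r x = scaleC (complex_of_real r) x"

class complex_inner = complex_vector + real_normed_vector +
  fixes cinner :: "'a \<Rightarrow> 'a \<Rightarrow> complex"
  assumes cinner_commute: "cinner x y = cnj (cinner y x)"
    and cinner_add_right: "cinner x (y + z) = cinner x y + cinner x z"
    and cinner_scaleC_right: "cinner x (scaleC c y) = c * cinner x y"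
    and cinner_ge_zero: "0 \<le> Re (cinner x x)"
    and cinner_eq_zero_iff: "cinner x x = 0 \<longleftrightarrow> x = 0"
    and norm_eq_sqrt_cinner: "norm x = sqrt (Re (cinner x x))"

class chilbert_space = complex_inner + complete_space

definition pscale :: "complex \<Rightarrow> ('a::complex_vector \<times> 'a) \<Rightarrow> 'a \<times> 'a" where
  "pscale c p = (scaleC c (fst p), scaleC c (snd p))"

definition pinner :: "('a::complex_inner \<times> 'a) \<Rightarrow> 'a \<times> 'a \<Rightarrow> complex" where
  "pinner p q = cinner (fst p) (fst q) + cinner (snd p) (snd q)"

definition is_subspace2 :: "('a::complex_vector \<times> 'a) set \<Rightarrow> bool" where
  "is_subspace2 T \<longleftrightarrow> (0, 0) \<in> T \<and> (\<forall>p\<in>T. \<forall>q\<in>T. p + q \<in> T) \<and> (\<forall>c. \<forall>p\<in>T. pscale c p \<in> T)"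

definition rel_adjoint :: "('a::complex_inner \<times> 'a) set \<Rightarrow> ('a \<times> 'a) set" where
  "rel_adjoint T = {(y, g). \<forall>(x, f)\<in>T. cinner g x = cinner y f}"

definition hermitian_rel :: "('a::complex_inner \<times> 'a) set \<Rightarrow> bool" where
  "hermitian_rel T \<longleftrightarrow> T \<subseteq> rel_adjoint T"

definition self_adjoint_rel :: "('a::complex_inner \<times> 'a) set \<Rightarrow> bool" where
  "self_adjoint_rel T \<longleftrightarrow> T = rel_adjoint T"

definition rel_inverse :: "('a \<times> 'a) set \<Rightarrow> ('a \<times> 'a) set" where
  "rel_inverse T = {(f, x). (x, f) \<in> T}"

definition lam_minus_rel :: "complex \<Rightarrow> ('a::complex_vector \<times> 'a) set \<Rightarrow> ('a \<times> 'a) set" where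
  "lam_minus_rel c T = {(x, scaleC c x - f) | x f. (x, f) \<in> T}"

definition rel_minus_lam :: "('a::complex_vector \<times> 'a) set \<Rightarrow> complex \<Rightarrow> ('a \<times> 'a) set" where
  "rel_minus_lam T c = {(x, f - scaleC c x) | x f. (x, f) \<in> T}"

definition op_of :: "('a \<times> 'b) set \<Rightarrow> 'a \<Rightarrow> 'b" where
  "op_of R y = (THE x. (y, x) \<in> R)"

definition bounded_clinear_op :: "('a::complex_inner \<Rightarrow> 'a) \<Rightarrow> bool" where
  "bounded_clinear_op A \<longleftrightarrow> (\<forall>x y. A (x + y) = A x + A y) \<and> (\<forall>c x. A (scaleC c x) = scaleC c (A x))
     \<and> (\<exists>K. \<forall>x. norm (A x) \<le> norm x * K)"

definition resolvent_set_rel :: "('a::complex_inner \<times> 'a) set \<Rightarrow> complex set" where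
  "resolvent_set_rel T = {c. (\<forall>y. \<exists>!x. (y, x) \<in> rel_inverse (lam_minus_rel c T))
       \<and> bounded_clinear_op (op_of (rel_inverse (lam_minus_rel c T)))}"

definition oproj2 :: "('a::complex_inner \<times> 'a) set \<Rightarrow> 'a \<times> 'a \<Rightarrow> 'a \<times> 'a" where
  "oproj2 T z = (THE p. p \<in> T \<and> (\<forall>q\<in>T. pinner (z - p) q = 0))"

definition cspan2 :: "('a::complex_vector \<times> 'a) set \<Rightarrow> ('a \<times> 'a) set" where
  "cspan2 B = {\<Sum>b\<in>F. pscale (c b) b | F c. finite F \<and> F \<subseteq> B}"

definition finite_rank_perturbation :: "('a::complex_inner \<times> 'a) set \<Rightarrow> ('a \<times> 'a) set \<Rightarrow> bool" where
  "finite_rank_perturbation T S \<longleftrightarrow>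
     (\<exists>B. finite B \<and> range (\<lambda>z. oproj2 T z - oproj2 S z) \<subseteq> cspan2 B)"

definition cspan :: "'a::complex_vector set \<Rightarrow> 'a set" where
  "cspan E = {\<Sum>b\<in>F. scaleC (c b) b | F c. finite F \<and> F \<subseteq> E}"

definition is_onb :: "'a::complex_inner set \<Rightarrow> bool" where
  "is_onb E \<longleftrightarrow> (\<forall>e\<in>E. norm e = 1) \<and> (\<forall>e\<in>E. \<forall>e'\<in>E. e \<noteq> e' \<longrightarrow> cinner e e' = 0)
     \<and> closure (cspan E) = UNIV"

definition is_adjoint_op :: "('a::complex_inner \<Rightarrow> 'a) \<Rightarrow> ('a \<Rightarrow> 'a) \<Rightarrow> bool" where
  "is_adjoint_op A B \<longleftrightarrow> (\<forall>x y. cinner (A x) y = cinner x (B y))"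

definition positive_op :: "('a::complex_inner \<Rightarrow> 'a) \<Rightarrow> bool" where
  "positive_op P \<longleftrightarrow> bounded_clinear_op P \<and> (\<forall>x. Im (cinner x (P x)) = 0 \<and> 0 \<le> Re (cinner x (P x)))"

text \<open>A is trace class: for |A| = (A^*A)^{1/2} and some orthonormal basis E,
  the sum over e in E of <e, |A| e> converges.\<close>
definition trace_class_op :: "('a::chilbert_space \<Rightarrow> 'a) \<Rightarrow> bool" where
  "trace_class_op A \<longleftrightarrow> bounded_clinear_op A \<and>
     (\<exists>Aadj P E. bounded_clinear_op Aadj \<and> is_adjoint_op A Aadj \<and> positive_op P
        \<and> (\<forall>x. P (P x) = Aadj (A x)) \<and> is_onb E \<and> (\<lambda>e. cinner e (P e)) summable_on E)"

end

theory Submission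
  imports Defs
begin

text \<open>Only one hypothesis matters: a Hermitian relation T for which \<lambda>I - T is surjective at a real
  \<lambda> is self-adjoint. Given (y, g) \<in> T*, pick (x, f) \<in> T with \<lambda>y - g = \<lambda>x - f; since T \<subseteq> T*, the
  difference (w, \<lambda>w) = (y - x, g - f) lies in T*, so w is orthogonal to the range of \<lambda>I - T,
  which is all of X. Hence w = 0 and (y, g) = (x, f) \<in> T.\<close>

lemma scaleC_diff_right: "scaleC c (a - b) = scaleC c a - scaleC c (b::'a::complex_vector)"
proof -
  have "scaleC c (a - b) + scaleC c b = scaleC c a"
    by (metis scaleC_add_right diff_add_cancel)
  then show ?thesis by (simp add: eq_diff_eq)
qed

lemma scaleC_zero_right: "scaleC c 0 = (0::'a::complex_vector)"
  using scaleC_diff_right[of c 0 0] by simp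

lemma cinner_diff_right: "cinner x (a - b) = cinner x a - cinner x (b::'a::complex_inner)"
proof -
  have "cinner x (a - b) + cinner x b = cinner x a"
    by (metis cinner_add_right diff_add_cancel)
  then show ?thesis by (simp add: eq_diff_eq)
qed

lemma cinner_diff_left: "cinner (a - b) x = cinner a x - cinner (b::'a::complex_inner) x"
  by (metis cinner_commute cinner_diff_right complex_cnj_diff)

lemma cinner_scaleC_left: "cinner (scaleC c a) x = cnj c * cinner (a::'a::complex_inner) x"
  by (metis cinner_commute cinner_scaleC_right complex_cnj_mult complex_cnj_cnj)

lemma rel_adjoint_diff:
  assumes "(y, g) \<in> rel_adjoint T" and "(x, f) \<in> rel_adjoint T"
  shows "(y - x, g - f) \<in> rel_adjoint T"
  using assms unfolding rel_adjoint_def by (fastforce simp: cinner_diff_left cinner_diff_right)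

lemma rel_adjoint_eigenpair_orthogonal_range:
  assumes "(w, scaleC c w) \<in> rel_adjoint T" and "c \<in> \<real>" and "(u, h) \<in> T"
  shows "cinner w (scaleC c u - h) = 0"
proof -
  have "cinner (scaleC c w) u = cinner w h"
    using assms(1,3) unfolding rel_adjoint_def by blast
  then show ?thesis
    using assms(2) by (simp add: Reals_cnj_iff cinner_scaleC_left cinner_diff_right cinner_scaleC_right)
qed

lemma resolvent_set_rel_surj:
  assumes "c \<in> resolvent_set_rel T"
  obtains x f where "(x, f) \<in> T" and "z = scaleC c x - f"
proof -
  from assms obtain x where "(z, x) \<in> rel_inverse (lam_minus_rel c T)"
    unfolding resolvent_set_rel_def by blast
  then show ?thesis using that unfolding rel_inverse_def lam_minus_rel_def by auto
qed

lemma hermitian_rel_self_adjoint_if_real_resolvent: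
  assumes herm: "hermitian_rel T" and "c \<in> resolvent_set_rel T" and "c \<in> \<real>"
  shows "self_adjoint_rel T"
proof -
  have "(y, g) \<in> T" if yg: "(y, g) \<in> rel_adjoint T" for y g
  proof -
    obtain x f where xf: "(x, f) \<in> T" and eq: "scaleC c y - g = scaleC c x - f"
      using resolvent_set_rel_surj[OF assms(2)] by metis
    define w where "w = y - x"
    have gf: "g - f = scaleC c w"
      unfolding w_def scaleC_diff_right using eq
      by (metis add_diff_cancel_left' diff_add_cancel diff_diff_eq2 diff_diff_eq)
    have "(x, f) \<in> rel_adjoint T" using xf herm unfolding hermitian_rel_def by blast
    then have "(w, scaleC c w) \<in> rel_adjoint T"
      using rel_adjoint_diff[OF yg] gf unfolding w_def by metis
    moreover obtain u h where "(u, h) \<in> T" and "w = scaleC c u - h"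
      using resolvent_set_rel_surj[OF assms(2)] by metis
    ultimately have "cinner w w = 0"
      using rel_adjoint_eigenpair_orthogonal_range assms(3) by metis
    then have "w = 0" by (simp add: cinner_eq_zero_iff)
    then show ?thesis using gf xf by (simp add: w_def scaleC_zero_right)
  qed
  then show ?thesis using herm unfolding self_adjoint_rel_def hermitian_rel_def by auto
qed

theorem corollary4p4:
  fixes S T :: "('a::chilbert_space \<times> 'a) set"
  assumes "is_subspace2 S" and "self_adjoint_rel S"
    and "is_subspace2 T" and "closed T" and "hermitian_rel T"
    and "resolvent_set_rel S \<inter> resolvent_set_rel T \<inter> \<real> \<noteq> {}"
    and "finite_rank_perturbation T S \<or>
         (\<exists>l\<in>resolvent_set_rel S \<inter> resolvent_set_rel T \<inter> \<real>.
            trace_class_op (\<lambda>y. op_of (rel_inverse (rel_minus_lam T l)) y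
                              - op_of (rel_inverse (rel_minus_lam S l)) y))"
  shows "self_adjoint_rel T"
proof -
  obtain c where "c \<in> resolvent_set_rel T" and "c \<in> \<real>" using assms(6) by blast
  then show ?thesis using hermitian_rel_self_adjoint_if_real_resolvent assms(5) by blast
qed

end
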